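(* Consider the closed-loop orbit–attitude error system described in the context, namely \[ \dot{\bm X}_e^h=\mathbf A\bm X_e^h+\mathbf A(\bm x_d^h+\bm x_{e,ss}^h)+\bm b^h\Delta S,\qquad \Delta\dot S=-(\bm\psi^b)^\top\bm\omega^b-\phi,\qquad \mathbf J\dot{\bm\omega}^b=\mathcal S(\mathbf J\bm\omega^b)\bm\omega^b+\bm u^b . \] Assume that $\bm m(t)=\hat{\bm m}$ for all $t\ge\hat t$, i.e. $\mathrm{diag}(\hat{\bm m})\mathbf R_i^b(t)\bm\xi^i(t)\ge 0$ componentwise for all $t\ge\hat t\ge 0$. Let $\mathbf Q\in\mathbb R^{4\times4}$ be symmetric positive definite, $\mathfrak R>0$, let $\mathbf P$ be the symmetric positive definite solution of the algebraic Riccati equation $\mathbf A^\top\mathbf P+\mathbf P\mathbf A-\mathbf P\bm b^h\mathfrak R^{-1}(\bm b^h)^\top\mathbf P+\mathbf Q=\mathbf 0$, and let $\bm g=\mathfrak R^{-1}\mathbf P\bm b^h\in\mathbb R^4$ be the associated LQR gain stabilizing the pair $(\mathbf A,\bm b^h)$. Define $\Delta S_d=-\bm g^\top\bm X_e^h+\overline{\Delta S}$, $\Delta S_e=\Delta S-\Delta S_d$, $\mathbf A_c=\mathbf A-\bm b^h\bm g^\top$, and \[ \Lambda=-\phi+\big[(\bm b^h)^\top\mathbf P+\bm g^\top\mathbf A_c\big]\bm X_e^h+\bm g^\top\bm b^h\,\Delta S_e . \] Let $k_s>0$ and let $\bm\omega_d^b(t)$ be a (time-differentiable) solution of the underdetermined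 linear equation \[ \Lambda-(\bm\psi^b)^\top\bm\omega_d^b+k_s\,\Delta S_e=0 \] which is compatible with the configuration condition $\bm m=\hat{\bm m}$ above. Define $\bm\omega_e^b=\bm\omega^b-\bm\omega_d^b$. Then the equilibrium point $(\bm X_e^h,\Delta S_e,\bm\omega_e^b)=(\bm 0,0,\bm 0)$ of the error dynamics $\{\dot{\bm X}_e^h,\Delta\dot S_e,\dot{\bm\omega}_e^b\}$ is asymptotically stable when the rotational dynamics is in closed loop with the control law \[ \bm u^b=-\mathcal S(\mathbf J\bm\omega^b)\bm\omega^b+\mathbf J\dot{\bm\omega}_d^b+\Delta S_e\,\bm\psi^b-\mathbf K_\omega\bm\omega_e^b , \] where $\mathbf K_\omega\in\mathbb R^{3\times3}$ is any symmetric positive definite gain matrix.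
   Context: Notation: for $\bm x\in\mathbb R^3$, $\mathcal S(\bm x)$ is the skew-symmetric matrix with $\mathcal S(\bm x)\bm y=\bm x\times\bm y$. For a vector, $\mathrm{sgn}$ acts componentwise, and $\mathrm{diag}(\bm v)$ is the diagonal matrix with diagonal $\bm v$. Attitude setting (follower spacecraft, a cuboid CubeSat): $\mathbf J\in\mathbb R^{3\times3}$ is its symmetric positive definite inertia tensor, $\bm\omega^b(t)\in\mathbb R^3$ its angular velocity in the body frame, $\bm u^b(t)$ the control torque, and $\mathbf R_i^b(t)\in SO(3)$ the inertial-to-body rotation matrix, satisfying $\dot{\mathbf R}_i^b=-\mathcal S(\bm\omega^b)\mathbf R_i^b$. $\bm\xi^i(t)$ is the unit vector (in the inertial frame) along the atmosphere–spacecraft relative velocity, with time derivative $\dot{\bm\xi}^i(t)$, and $\bm\eta^b=\mathbf R_i^b\bm\xi^i$. Let $\bm s=[\hat S_1,\hat S_2,\hat S_3]^\top$ be the (positive) areas of the three pairs of faces, $\bm\sigma=\mathrm{diag}(\bm s)$, $\bm m=\mathrm{sgn}(\bm\eta^b)$, $\hat t\ge0$ the start of control, $\hat{\bm m}=\bm m(\hat t)$, and $\bm s_m=\bm\sigma\hat{\bm m}$. The follower's effective surface is $S_f=\bm m^\top\bm\sigma\bm\eta^b$; when $\bm m=\hat{\bm m}$ it satisfies $\dot S_f=(\bm\psi^b)^\top\bm\omega^b+\phi$ with $\bm\psi^b=-\mathcal S(\bm\eta^b)\bm s_m$ and $\phi=\bm s_m^\top\mathbf R_i^b\dot{\bm\xi}^i$.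 The leader's effective surface is a constant $\bar S_l$, and $\Delta S=\bar S_l-S_f$. Orbital setting (linearized relative motion with drag): constants $\nu_f>0$, $w_f>0$, $\bar\beta>0$, $\|\bm\omega_\oplus\|>0$, inclination $\mathscr i_f\in[0,\pi]$, and $\lambda_{\mathscr i}=\bar\beta\bar S_l w_f\|\bm\omega_\oplus\|\cos(\mathscr i_f)$. Define \[ \mathbf A=\begin{bmatrix}0&0&1&0\\0&0&0&1\\3\nu_f^2&-\lambda_{\mathscr i}&-\bar\beta\bar S_l w_f&2\nu_f\\-2\lambda_{\mathscr i}&0&-2\nu_f&-2\bar\beta\bar S_l w_f\end{bmatrix},\qquad \bm b^h=-\bar\beta w_f^2\,[0,0,0,1]^\top . \] The relative state is $\bm x^h=[x^h,y^h,\dot x^h,\dot y^h]^\top$ with reference $\bm x_d^h=[x_d^h,y_d^h,0,0]^\top$; $\bm x_e^h=\bm x^h-\bm x_d^h$. Set $\epsilon_r=y_d^h\lambda_{\mathscr i}/(3\nu_f^2)$, $\overline{\Delta S}=-2\lambda_{\mathscr i}\epsilon_r/(\bar\beta w_f^2)$, $\bm x_{e,ss}^h=[\epsilon_r-x_d^h,0,0,0]^\top$, and $\bm X_e^h=\bm x_e^h-\bm x_{e,ss}^h$. The error dynamics of $\Delta S_e$ and $\bm\omega_e^b$ are those induced by the three displayed differential equations and the definitions of $\Delta S_d$ and $\bm\omega_d^b$. *)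

theory Defs
  imports "HOL-Analysis.Analysis"
begin

definition skew :: "real^3 \<Rightarrow> real^3^3" where
  "skew x = vector [vector [0, -(x$3), x$2],
                    vector [x$3, 0, -(x$1)],
                    vector [-(x$2), x$1, 0]]"

definition outer :: "real^'n \<Rightarrow> real^'m \<Rightarrow> real^'m^'n" where
  "outer u v = (\<chi> i j. u$i * v$j)"

definition diagm :: "real^'n \<Rightarrow> real^'n^'n" where
  "diagm v = (\<chi> i j. if i = j then v$i else 0)"

definition vsgn :: "real^'n \<Rightarrow> real^'n" where
  "vsgn v = (\<chi> i. sgn (v$i))"

definition sym_pd :: "real^'n^'n \<Rightarrow> bool" where
  "sym_pd M \<longleftrightarrow> transpose M = M \<and> (\<forall>x. x \<noteq> 0 \<longrightarrow> 0 < x \<bullet> (M *v x))"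

definition SO3 :: "(real^3^3) set" where
  "SO3 = {R. orthogonal_matrix R \<and> det R = 1}"

definition lam_i :: "real \<Rightarrow> real \<Rightarrow> real \<Rightarrow> real \<Rightarrow> real \<Rightarrow> real \<Rightarrow> real" where
  "lam_i nu w beta Sl wE inc = beta * Sl * w * wE * cos inc"

definition Amat :: "real \<Rightarrow> real \<Rightarrow> real \<Rightarrow> real \<Rightarrow> real \<Rightarrow> real \<Rightarrow> real^4^4" where
  "Amat nu w beta Sl wE inc =
     (let lam = lam_i nu w beta Sl wE inc in
      vector [vector [0, 0, 1, 0],
              vector [0, 0, 0, 1],
              vector [3 * nu^2, -lam, -(beta * Sl * w), 2 * nu],
              vector [-(2 * lam), 0, -(2 * nu), -(2 * beta * Sl * w)]])"

definition bvec :: "real \<Rightarrow> real \<Rightarrow> real^4" where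
  "bvec w beta = vector [0, 0, 0, -(beta * w^2)]"

end

(* With the LQR gain g = (1/Rf) P b, the orbital error obeys X' = A_c X + dS_e b, where dS_e is the
   surface error.  The desired angular velocity omega_d is chosen so that
   dS_e' = -psi^T omega_e - k_s dS_e - b^T P X, and the control law gives
   J omega_e' = dS_e psi - K omega_e.  For V = X^T P X + dS_e^2 + omega_e^T J omega_e the two
   cross terms 2 dS_e b^T P X and 2 dS_e psi^T omega_e cancel, and the Riccati equation turns
   what is left into V' = -X^T Q X - (1/Rf) (b^T P X)^2 - 2 k_s dS_e^2 - 2 omega_e^T K omega_e.
   Hence V' <= -c V, so |Z(t)|^2 <= (M/m) |Z(t0)|^2 exp(-c (t - t0)) with constants that do not
   depend on the trajectory, which gives stability and attractivity of the origin. *)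

theory Submission
  imports Defs
begin

unbundle cross3_syntax

lemma bounded_bilinear_matrix_vector_mult:
  "bounded_bilinear ((*v) :: real^'n^'m \<Rightarrow> real^'n \<Rightarrow> real^'m)"
  unfolding bilinear_conv_bounded_bilinear[symmetric] bilinear_def linear_iff
  by (simp add: matrix_vector_right_distrib matrix_vector_mult_add_rdistrib
      matrix_vector_mult_scaleR scaleR_matrix_vector_assoc)

lemma inner_transpose_mult_vec: "x \<bullet> (transpose A *v y) = (A *v x) \<bullet> (y::real^'n)"
  by (metis dot_lmul_matrix inner_commute transpose_matrix_vector)

lemma inner_matrix_vector_symmetric:
  fixes M :: "real^'n^'n"
  assumes "transpose M = M"
  shows "x \<bullet> (M *v y) = y \<bullet> (M *v x)"
  by (metis assms inner_transpose_mult_vec inner_commute)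

lemma has_vector_derivative_quadratic_form:
  fixes M :: "real^'n^'n"
  assumes "transpose M = M" and "(X has_vector_derivative X') (at t within S)"
  shows "((\<lambda>t. X t \<bullet> (M *v X t)) has_vector_derivative 2 * (X' \<bullet> (M *v X t))) (at t within S)"
proof -
  have "((\<lambda>t. M *v X t) has_vector_derivative M *v X') (at t within S)"
    by (rule bounded_linear.has_vector_derivative[OF matrix_vector_mul_bounded_linear assms(2)])
  from bounded_bilinear.has_vector_derivative[OF bounded_bilinear_inner assms(2) this]
  show ?thesis
    by (simp add: inner_matrix_vector_symmetric[OF assms(1), of "X t"])
qed

lemma quadratic_form_ge_norm_square:
  fixes M :: "real^'n^'n"
  assumes "\<forall>x. x \<noteq> 0 \<longrightarrow> 0 < x \<bullet> (M *v x)"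
  obtains a where "a > 0" "\<And>x. a * (norm x)\<^sup>2 \<le> x \<bullet> (M *v x)"
proof -
  have cont: "continuous_on (sphere 0 1) (\<lambda>x. x \<bullet> (M *v x))"
    by (intro continuous_intros continuous_on_compose2[OF linear_continuous_on[OF matrix_vector_mul_bounded_linear]]) auto
  obtain z where z: "z \<in> sphere (0::real^'n) 1"
      and z_min: "\<And>y. y \<in> sphere 0 1 \<Longrightarrow> z \<bullet> (M *v z) \<le> y \<bullet> (M *v y)"
    using continuous_attains_inf[OF compact_sphere _ cont] by auto
  show thesis
  proof
    have "z \<noteq> 0" using z by auto
    then show "z \<bullet> (M *v z) > 0" using assms by blast
    show "z \<bullet> (M *v z) * (norm x)\<^sup>2 \<le> x \<bullet> (M *v x)" for x
    proof (cases "x = 0")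
      case False
      have "z \<bullet> (M *v z) \<le> (x /\<^sub>R norm x) \<bullet> (M *v (x /\<^sub>R norm x))"
        using False by (intro z_min) simp
      also have "\<dots> = (x \<bullet> (M *v x)) / (norm x)\<^sup>2"
        by (simp add: matrix_vector_mult_scaleR power2_eq_square divide_inverse)
      finally show ?thesis using False by (simp add: pos_le_divide_eq)
    qed simp
  qed
qed

lemma quadratic_form_le_norm_square:
  fixes M :: "real^'n^'n"
  obtains B where "\<And>x. x \<bullet> (M *v x) \<le> B * (norm x)\<^sup>2"
proof -
  obtain B where B: "\<And>x. norm (M *v x) \<le> norm x * B"
    using bounded_linear.pos_bounded[OF matrix_vector_mul_bounded_linear] by blast
  have "x \<bullet> (M *v x) \<le> B * (norm x)\<^sup>2" for x
  proof -
    have "x \<bullet> (M *v x) \<le> norm x * norm (M *v x)" by (rule norm_cauchy_schwarz)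
    also have "\<dots> \<le> norm x * (norm x * B)" by (intro mult_left_mono B) simp
    finally show ?thesis by (simp add: power2_eq_square mult_ac)
  qed
  then show thesis by (rule that)
qed

lemma skew_mult_vec: "skew x *v y = x \<times> y"
  unfolding skew_def cross3_def by (simp add: vec_eq_iff matrix_vector_mult_def sum_3 forall_3)

lemma diagm_mult_vec: "diagm s *v v = (\<chi> i. s $ i * v $ i)"
  by (simp add: vec_eq_iff diagm_def matrix_vector_mult_def mult_delta_left)

lemma inner_diagm_mult_vec: "u \<bullet> (diagm s *v v) = (diagm s *v u) \<bullet> v"
  by (simp add: diagm_mult_vec inner_vec_def mult_ac)

lemma outer_mult_vec: "outer u v *v y = (v \<bullet> y) *\<^sub>R u"
  by (simp add: vec_eq_iff outer_def matrix_vector_mult_def inner_vec_def sum_distrib_left mult_ac)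

lemma has_vector_derivative_inner_rotated:
  fixes Rm :: "real \<Rightarrow> real^3^3" and xi :: "real \<Rightarrow> real^3"
  assumes "(Rm has_vector_derivative - (skew \<omega> ** Rm t)) (at t within S)"
    and "(xi has_vector_derivative xi') (at t within S)"
  shows "((\<lambda>q. \<sigma> \<bullet> (Rm q *v xi q)) has_vector_derivative
            \<sigma> \<bullet> (Rm t *v xi') - (skew (Rm t *v xi t) *v \<sigma>) \<bullet> \<omega>) (at t within S)"
proof -
  have "((\<lambda>q. Rm q *v xi q) has_vector_derivative
          Rm t *v xi' + (- (skew \<omega> ** Rm t)) *v xi t) (at t within S)"
    by (rule bounded_bilinear.has_vector_derivative[OF bounded_bilinear_matrix_vector_mult assms])
  from bounded_linear.has_vector_derivative[OF bounded_linear_inner_right this, of \<sigma>]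
  show ?thesis
    using cross_triple[of \<omega> "Rm t *v xi t" \<sigma>]
    by (simp add: inner_diff_right matrix_vector_mul_assoc[symmetric] skew_mult_vec
        bounded_bilinear.minus_left[OF bounded_bilinear_matrix_vector_mult]
        inner_commute[of \<sigma> "\<omega> \<times> (Rm t *v xi t)"])
qed

(* While the sign pattern of the flow direction is frozen, the effective surface is linear in it. *)
lemma effective_surface_has_derivative:
  fixes Rm :: "real \<Rightarrow> real^3^3" and xi :: "real \<Rightarrow> real^3" and s :: "real^3"
  assumes sign: "\<And>q. q \<ge> t0 \<Longrightarrow> vsgn (Rm q *v xi q) = vsgn (Rm t0 *v xi t0)"
    and dRm: "(Rm has_vector_derivative - (skew \<omega> ** Rm t)) (at t within {t0..})"
    and dxi: "(xi has_vector_derivative xi') (at t within {t0..})"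
    and "t \<ge> t0"
  defines "\<sigma> \<equiv> diagm s *v vsgn (Rm t0 *v xi t0)"
  shows "((\<lambda>q. Sl - vsgn (Rm q *v xi q) \<bullet> (diagm s *v (Rm q *v xi q))) has_real_derivative
            - (\<sigma> \<bullet> (Rm t *v xi')) - (- (skew (Rm t *v xi t) *v \<sigma>)) \<bullet> \<omega>) (at t within {t0..})"
proof (rule has_field_derivative_transform_within[where d = 1])
  show "((\<lambda>q. Sl - \<sigma> \<bullet> (Rm q *v xi q)) has_real_derivative
            - (\<sigma> \<bullet> (Rm t *v xi')) - (- (skew (Rm t *v xi t) *v \<sigma>)) \<bullet> \<omega>) (at t within {t0..})"
    using has_vector_derivative_inner_rotated[OF dRm dxi, of \<sigma>]
    unfolding has_real_derivative_iff_has_vector_derivative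
    by (auto intro: has_vector_derivative_eq_rhs[OF has_vector_derivative_diff[OF has_vector_derivative_const]])
  show "Sl - \<sigma> \<bullet> (Rm q *v xi q) = Sl - vsgn (Rm q *v xi q) \<bullet> (diagm s *v (Rm q *v xi q))"
    if "q \<in> {t0..}" for q
    using sign[of q] that by (simp add: \<sigma>_def inner_diagm_mult_vec)
qed (use \<open>t \<ge> t0\<close> in auto)

lemma riccati_quadratic_form:
  fixes A P Q :: "real^'n^'n"
  assumes P_sym: "transpose P = P"
    and ARE: "transpose A ** P + P ** A - (1 / Rf) *\<^sub>R (P ** outer b b ** P) + Q = 0"
  shows "2 * ((A *v x) \<bullet> (P *v x)) = (1 / Rf) * (b \<bullet> (P *v x))\<^sup>2 - x \<bullet> (Q *v x)"
proof -
  have "0 = x \<bullet> ((transpose A ** P + P ** A - (1 / Rf) *\<^sub>R (P ** outer b b ** P) + Q) *v x)"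
    using ARE by simp
  also have "\<dots> = x \<bullet> ((transpose A ** P) *v x) + x \<bullet> ((P ** A) *v x)
                   - (1 / Rf) * (x \<bullet> ((P ** outer b b ** P) *v x)) + x \<bullet> (Q *v x)"
    by (simp only: matrix_vector_mult_add_rdistrib matrix_vector_mult_diff_rdistrib
        scaleR_matrix_vector_assoc[symmetric] inner_add_right inner_diff_right inner_scaleR_right)
  also have "x \<bullet> ((transpose A ** P) *v x) = (A *v x) \<bullet> (P *v x)"
    by (metis matrix_vector_mul_assoc inner_transpose_mult_vec)
  also have "x \<bullet> ((P ** A) *v x) = (A *v x) \<bullet> (P *v x)"
    by (simp add: matrix_vector_mul_assoc[symmetric] inner_matrix_vector_symmetric[OF P_sym])
  also have "x \<bullet> ((P ** outer b b ** P) *v x) = (b \<bullet> (P *v x))\<^sup>2"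
    by (simp add: matrix_vector_mul_assoc[symmetric] inner_matrix_vector_symmetric[OF P_sym, of x]
        outer_mult_vec power2_eq_square)
  finally show ?thesis by linarith
qed

lemma vector_4 [simp]:
  "(vector [x, y, z, u] :: ('a::zero)^4) $ 1 = x"
  "(vector [x, y, z, u] :: ('a::zero)^4) $ 2 = y"
  "(vector [x, y, z, u] :: ('a::zero)^4) $ 3 = z"
  "(vector [x, y, z, u] :: ('a::zero)^4) $ 4 = u"
  unfolding vector_def by simp_all

(* The shifted reference x_d + x_ss is the equilibrium held by the constant surface offset. *)
lemma Amat_mult_steady_state:
  assumes "nu > 0" "beta > 0" "w > 0"
    and "lam = lam_i nu w beta Sl wE inc"
    and "er = yd * lam / (3 * nu^2)"
    and "dSbar = - 2 * lam * er / (beta * w^2)"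
  shows "Amat nu w beta Sl wE inc *v vector [er, yd, 0, 0] = - dSbar *\<^sub>R bvec w beta"
proof -
  have "3 * nu^2 * er = yd * lam" "dSbar * (beta * w^2) = - 2 * lam * er"
    using assms by simp_all
  then show ?thesis
    by (simp add: assms(4)[symmetric] Amat_def bvec_def Let_def vec_eq_iff forall_4
        matrix_vector_mult_def sum_4 algebra_simps)
qed

lemma lqr_closed_loop_has_vector_derivative:
  fixes A :: "real^'n^'n"
  assumes "(X has_vector_derivative A *v X t + A *v x0 + S *\<^sub>R b) F"
    and "A *v x0 = - S0 *\<^sub>R b"
  shows "(X has_vector_derivative (A - outer b g) *v X t + (S - (- (g \<bullet> X t) + S0)) *\<^sub>R b) F"
proof -
  have "A *v X t + A *v x0 + S *\<^sub>R b = (A - outer b g) *v X t + (S - (- (g \<bullet> X t) + S0)) *\<^sub>R b"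
    unfolding assms(2) by (simp add: outer_mult_vec matrix_vector_mult_diff_rdistrib algebra_simps)
  with assms(1) show ?thesis by simp
qed

lemma surface_error_has_derivative:
  fixes X :: "real \<Rightarrow> real^'n" and \<psi> :: "real^'m"
  assumes dS: "(S has_real_derivative - \<phi> - \<psi> \<bullet> \<omega>) (at t within T)"
    and dX: "(X has_vector_derivative Ac *v X t + E t *\<^sub>R b) (at t within T)"
    and E: "E = (\<lambda>q. S q - (- (g \<bullet> X q) + S0))"
    and constraint: "- \<phi> + (b \<bullet> (P *v X t) + g \<bullet> (Ac *v X t)) + (g \<bullet> b) * E t - \<psi> \<bullet> \<omega>d + ks * E t = 0"
  shows "(E has_real_derivative - (\<psi> \<bullet> (\<omega> - \<omega>d)) - ks * E t - b \<bullet> (P *v X t)) (at t within T)"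
proof (rule DERIV_cong)
  have "((\<lambda>q. g \<bullet> X q) has_vector_derivative g \<bullet> (Ac *v X t + E t *\<^sub>R b)) (at t within T)"
    by (rule bounded_linear.has_vector_derivative[OF bounded_linear_inner_right dX])
  from has_vector_derivative_diff[OF dS[unfolded has_real_derivative_iff_has_vector_derivative]
      has_vector_derivative_add[OF has_vector_derivative_minus[OF this] has_vector_derivative_const]]
  show "(E has_real_derivative (- \<phi> - \<psi> \<bullet> \<omega>) - (- (g \<bullet> (Ac *v X t + E t *\<^sub>R b)) + 0)) (at t within T)"
    unfolding has_real_derivative_iff_has_vector_derivative by (simp only: E)
  have "g \<bullet> (Ac *v X t + E t *\<^sub>R b) = g \<bullet> (Ac *v X t) + (g \<bullet> b) * E t"
    by (simp add: inner_add_right)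
  then show "(- \<phi> - \<psi> \<bullet> \<omega>) - (- (g \<bullet> (Ac *v X t + E t *\<^sub>R b)) + 0)
      = - (\<psi> \<bullet> (\<omega> - \<omega>d)) - ks * E t - b \<bullet> (P *v X t)"
    unfolding inner_diff_right using constraint by linarith
qed

lemma backstepping_lyapunov_derivative:
  fixes A P Q :: "real^'n^'n" and b g :: "real^'n" and J K :: "real^'m^'m"
  assumes P_sym: "transpose P = P" and J_sym: "transpose J = J"
    and ARE: "transpose A ** P + P ** A - (1 / Rf) *\<^sub>R (P ** outer b b ** P) + Q = 0"
    and g: "g = (1 / Rf) *\<^sub>R (P *v b)"
    and dX: "(X has_vector_derivative (A - outer b g) *v X t + E t *\<^sub>R b) (at t within S)"
    and dE: "(E has_real_derivative - (\<psi> \<bullet> W t) - ks * E t - b \<bullet> (P *v X t)) (at t within S)"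
    and dW: "(W has_vector_derivative W') (at t within S)"
    and JW: "J *v W' = E t *\<^sub>R \<psi> - K *v W t"
  shows "((\<lambda>t. X t \<bullet> (P *v X t) + (E t)\<^sup>2 + W t \<bullet> (J *v W t)) has_real_derivative
            - (X t \<bullet> (Q *v X t)) - (1 / Rf) * (b \<bullet> (P *v X t))\<^sup>2
            - 2 * ks * (E t)\<^sup>2 - 2 * (W t \<bullet> (K *v W t))) (at t within S)"
proof -
  let ?dE = "- (\<psi> \<bullet> W t) - ks * E t - b \<bullet> (P *v X t)"
  have "((\<lambda>t. (E t)\<^sup>2) has_real_derivative 2 * E t * ?dE) (at t within S)"
    using dE by (auto intro!: derivative_eq_intros)
  then have "((\<lambda>t. X t \<bullet> (P *v X t) + (E t)\<^sup>2 + W t \<bullet> (J *v W t)) has_real_derivative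
          2 * (((A - outer b g) *v X t + E t *\<^sub>R b) \<bullet> (P *v X t)) + 2 * E t * ?dE
          + 2 * (W' \<bullet> (J *v W t))) (at t within S)"
    unfolding has_real_derivative_iff_has_vector_derivative
    by (intro has_vector_derivative_add has_vector_derivative_quadratic_form P_sym J_sym dX dW)
  moreover have "2 * (((A - outer b g) *v X t + E t *\<^sub>R b) \<bullet> (P *v X t)) + 2 * E t * ?dE
      + 2 * (W' \<bullet> (J *v W t))
      = - (X t \<bullet> (Q *v X t)) - (1 / Rf) * (b \<bullet> (P *v X t))\<^sup>2
        - 2 * ks * (E t)\<^sup>2 - 2 * (W t \<bullet> (K *v W t))"
  proof -
    have closed_loop: "((A - outer b g) *v X t + E t *\<^sub>R b) \<bullet> (P *v X t)
        = (A *v X t) \<bullet> (P *v X t) - (g \<bullet> X t) * (b \<bullet> (P *v X t)) + E t * (b \<bullet> (P *v X t))"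
      by (simp add: matrix_vector_mult_diff_rdistrib outer_mult_vec inner_add_left inner_diff_left)
    have attitude: "W' \<bullet> (J *v W t) = E t * (\<psi> \<bullet> W t) - W t \<bullet> (K *v W t)"
      using inner_matrix_vector_symmetric[OF J_sym, of W' "W t"] JW
      by (simp add: inner_diff_right inner_commute)
    have gain: "g \<bullet> X t = (1 / Rf) * (b \<bullet> (P *v X t))"
      using inner_matrix_vector_symmetric[OF P_sym, of "X t" b] by (simp add: g inner_commute)
    have scalar_identity: "\<And>a p e q k x. 2 * a = (1 / Rf) * p\<^sup>2 - x \<Longrightarrow>
        2 * (a - (1 / Rf) * p * p + e * p) + 2 * e * (- q - ks * e - p) + 2 * (e * q - k)
        = - x - (1 / Rf) * p\<^sup>2 - 2 * ks * e\<^sup>2 - 2 * k"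
      by (simp add: algebra_simps power2_eq_square)
    show ?thesis
      unfolding closed_loop attitude gain
      by (rule scalar_identity[OF riccati_quadratic_form[OF P_sym ARE]])
  qed
  ultimately show ?thesis by simp
qed

lemma differential_inequality_exp_bound:
  fixes V V' :: "real \<Rightarrow> real"
  assumes dV: "\<And>r. r \<ge> t0 \<Longrightarrow> (V has_real_derivative V' r) (at r within {t0..})"
    and ineq: "\<And>r. r \<ge> t0 \<Longrightarrow> V' r \<le> - c * V r"
    and "t \<ge> t0"
  shows "V t \<le> V t0 * exp (- c * (t - t0))"
proof -
  define W where "W r = exp (c * (r - t0)) * V r" for r
  have dW: "(W has_real_derivative exp (c * (r - t0)) * (c * V r + V' r)) (at r within {t0..})"
    if "r \<ge> t0" for r
    unfolding W_def using dV[OF that]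
    by (auto intro!: derivative_eq_intros simp: algebra_simps)
  have "W t \<le> W t0"
  proof (rule DERIV_nonpos_imp_decreasing_open[OF \<open>t \<ge> t0\<close>])
    fix r assume r: "t0 < r" "r < t"
    have "at r within {t0..} = at r"
      using r by (intro at_within_interior) simp
    then have "(W has_real_derivative exp (c * (r - t0)) * (c * V r + V' r)) (at r)"
      using dW[of r] r by simp
    moreover have "exp (c * (r - t0)) * (c * V r + V' r) \<le> 0"
      using ineq[of r] r by (intro mult_nonneg_nonpos) auto
    ultimately show "\<exists>y. (W has_real_derivative y) (at r) \<and> y \<le> 0" by blast
  next
    have "continuous_on {t0..} W"
      using dW by (intro continuous_on_vector_derivative)
        (auto simp: has_real_derivative_iff_has_vector_derivative)
    then show "continuous_on {t0..t} W" by (rule continuous_on_subset) auto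
  qed
  then have "exp (c * (t - t0)) * V t \<le> V t0"
    by (simp add: W_def)
  then show ?thesis
    by (simp add: exp_minus divide_inverse[symmetric] pos_le_divide_eq mult.commute)
qed

lemma lyapunov_exponential_estimate:
  fixes V V' N :: "real \<Rightarrow> real"
  assumes dV: "\<And>r. r \<ge> t0 \<Longrightarrow> (V has_real_derivative V' r) (at r within {t0..})"
    and decrease: "\<And>r. r \<ge> t0 \<Longrightarrow> V' r \<le> - c * N r"
    and lower: "\<And>r. m * N r \<le> V r" and upper: "\<And>r. V r \<le> M * N r"
    and "m > 0" "M > 0" "c \<ge> 0" "t \<ge> t0"
  shows "N t \<le> M / m * N t0 * exp (- (c / M) * (t - t0))"
proof -
  have decay_rate: "V' r \<le> - (c / M) * V r" if "r \<ge> t0" for r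
  proof -
    have "(c / M) * V r \<le> (c / M) * (M * N r)"
      using upper \<open>c \<ge> 0\<close> \<open>M > 0\<close> by (intro mult_left_mono) auto
    then show ?thesis using decrease[OF that] \<open>M > 0\<close> by simp
  qed
  have "V t \<le> V t0 * exp (- (c / M) * (t - t0))"
    by (rule differential_inequality_exp_bound[OF dV decay_rate \<open>t \<ge> t0\<close>])
  also have "\<dots> \<le> M * N t0 * exp (- (c / M) * (t - t0))"
    using upper by (intro mult_right_mono) auto
  finally have "m * N t \<le> M * N t0 * exp (- (c / M) * (t - t0))"
    using lower[of t] by linarith
  then have "N t \<le> M * N t0 * exp (- (c / M) * (t - t0)) / m"
    using \<open>m > 0\<close> by (simp add: pos_le_divide_eq mult.commute)
  then show ?thesis by simp
qed

lemma sym_pd_block_quadratic_bounds: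
  fixes M1 :: "real^'n^'n" and M2 :: "real^'m^'m"
  assumes "sym_pd M1" "sym_pd M2" "a > 0"
  obtains m M where "0 < m" "m \<le> M"
    "\<And>x e y. m * (norm (x, e, y))\<^sup>2 \<le> x \<bullet> (M1 *v x) + a * e\<^sup>2 + y \<bullet> (M2 *v y)"
    "\<And>x e y. x \<bullet> (M1 *v x) + a * e\<^sup>2 + y \<bullet> (M2 *v y) \<le> M * (norm (x, e, y))\<^sup>2"
proof -
  obtain p1 p2 where "p1 > 0" "p2 > 0"
    and lower: "\<And>x. p1 * (norm x)\<^sup>2 \<le> x \<bullet> (M1 *v x)" "\<And>y. p2 * (norm y)\<^sup>2 \<le> y \<bullet> (M2 *v y)"
    using quadratic_form_ge_norm_square assms(1,2) unfolding sym_pd_def by metis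
  obtain B1 B2 where upper: "\<And>x. x \<bullet> (M1 *v x) \<le> B1 * (norm x)\<^sup>2" "\<And>y. y \<bullet> (M2 *v y) \<le> B2 * (norm y)\<^sup>2"
    using quadratic_form_le_norm_square by metis
  define m where "m = min p1 (min a p2)"
  define M where "M = max B1 (max a B2)"
  have norm_sq: "(norm (x, e, y))\<^sup>2 = (norm x)\<^sup>2 + e\<^sup>2 + (norm y)\<^sup>2" for x :: "real^'n" and e y
    by (simp add: norm_Pair)
  have "m \<le> p1" "m \<le> a" "m \<le> p2" "B1 \<le> M" "a \<le> M" "B2 \<le> M"
    by (simp_all add: m_def M_def)
  show thesis
  proof
    show "0 < m" "m \<le> M"
      using \<open>p1 > 0\<close> \<open>p2 > 0\<close> \<open>a > 0\<close> by (auto simp: m_def M_def)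
    show "m * (norm (x, e, y))\<^sup>2 \<le> x \<bullet> (M1 *v x) + a * e\<^sup>2 + y \<bullet> (M2 *v y)" for x e y
      using mult_right_mono[OF \<open>m \<le> p1\<close> zero_le_power2, of "norm x"]
        mult_right_mono[OF \<open>m \<le> a\<close> zero_le_power2, of e]
        mult_right_mono[OF \<open>m \<le> p2\<close> zero_le_power2, of "norm y"] lower(1)[of x] lower(2)[of y]
      unfolding norm_sq distrib_left by linarith
    show "x \<bullet> (M1 *v x) + a * e\<^sup>2 + y \<bullet> (M2 *v y) \<le> M * (norm (x, e, y))\<^sup>2" for x e y
      using mult_right_mono[OF \<open>B1 \<le> M\<close> zero_le_power2, of "norm x"]
        mult_right_mono[OF \<open>a \<le> M\<close> zero_le_power2, of e]
        mult_right_mono[OF \<open>B2 \<le> M\<close> zero_le_power2, of "norm y"] upper(1)[of x] upper(2)[of y]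
      unfolding norm_sq distrib_left by linarith
  qed
qed

(* X, E, W, W' play the roles of X_e^h, Delta S_e, omega_e^b and its derivative; the equation for E
   is what the choice of omega_d^b enforces, the one for J W' what the control law enforces. *)
definition backstepping_error_dynamics ::
    "real^'n^'n \<Rightarrow> real^'n \<Rightarrow> real^'n \<Rightarrow> real^'n^'n \<Rightarrow> real \<Rightarrow> real^'m^'m \<Rightarrow> real^'m^'m \<Rightarrow> real
     \<Rightarrow> (real \<Rightarrow> real^'n) \<Rightarrow> (real \<Rightarrow> real) \<Rightarrow> (real \<Rightarrow> real^'m) \<Rightarrow> (real \<Rightarrow> real^'m) \<Rightarrow> (real \<Rightarrow> real^'m)
     \<Rightarrow> bool" where
  "backstepping_error_dynamics A b g P ks J K t0 X E W \<psi> W' \<longleftrightarrow>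
     (\<forall>r\<ge>t0. (X has_vector_derivative (A - outer b g) *v X r + E r *\<^sub>R b) (at r within {t0..})
       \<and> (E has_real_derivative - (\<psi> r \<bullet> W r) - ks * E r - b \<bullet> (P *v X r)) (at r within {t0..})
       \<and> (W has_vector_derivative W' r) (at r within {t0..})
       \<and> J *v W' r = E r *\<^sub>R \<psi> r - K *v W r)"

lemma backstepping_exponential_estimate:
  fixes A P Q :: "real^'n^'n" and b g :: "real^'n" and J K :: "real^'m^'m"
  assumes P_pd: "sym_pd P" and Q_pd: "sym_pd Q" and J_pd: "sym_pd J" and K_pd: "sym_pd K"
    and "ks > 0" "Rf > 0"
    and ARE: "transpose A ** P + P ** A - (1 / Rf) *\<^sub>R (P ** outer b b ** P) + Q = 0"
    and g: "g = (1 / Rf) *\<^sub>R (P *v b)"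
  obtains R c where "R \<ge> 1" "c > 0"
    "\<And>X E W \<psi> W' t. backstepping_error_dynamics A b g P ks J K t0 X E W \<psi> W' \<Longrightarrow> t \<ge> t0 \<Longrightarrow>
       (norm (X t, E t, W t))\<^sup>2 \<le> R * (norm (X t0, E t0, W t0))\<^sup>2 * exp (- c * (t - t0))"
proof -
  obtain m M where "0 < m" "m \<le> M"
    and V_lower: "\<And>x e y. m * (norm (x, e, y))\<^sup>2 \<le> x \<bullet> (P *v x) + 1 * e\<^sup>2 + y \<bullet> (J *v y)"
    and V_upper: "\<And>x e y. x \<bullet> (P *v x) + 1 * e\<^sup>2 + y \<bullet> (J *v y) \<le> M * (norm (x, e, y))\<^sup>2"
    using sym_pd_block_quadratic_bounds[OF P_pd J_pd zero_less_one] by blast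
  obtain q where "0 < q"
    and dissipation: "\<And>x e y. q * (norm (x, e, y))\<^sup>2 \<le> x \<bullet> (Q *v x) + (2 * ks) * e\<^sup>2 + y \<bullet> (K *v y)"
    using sym_pd_block_quadratic_bounds[OF Q_pd K_pd] \<open>ks > 0\<close> by (metis mult_pos_pos zero_less_numeral)
  have P_sym: "transpose P = P" and J_sym: "transpose J = J" and K_nonneg: "\<And>y. 0 \<le> y \<bullet> (K *v y)"
    using P_pd J_pd K_pd unfolding sym_pd_def by (metis inner_zero_left order.strict_implies_order order_refl)+
  show thesis
  proof
    show "M / m \<ge> 1" "q / M > 0"
      using \<open>0 < m\<close> \<open>m \<le> M\<close> \<open>0 < q\<close> by simp_all
  next
    fix X E W \<psi> W' t
    assume "backstepping_error_dynamics A b g P ks J K t0 X E W \<psi> W'" and "t \<ge> t0"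
    then have dX: "\<And>r. r \<ge> t0 \<Longrightarrow> (X has_vector_derivative (A - outer b g) *v X r + E r *\<^sub>R b) (at r within {t0..})"
      and dE: "\<And>r. r \<ge> t0 \<Longrightarrow>
          (E has_real_derivative - (\<psi> r \<bullet> W r) - ks * E r - b \<bullet> (P *v X r)) (at r within {t0..})"
      and dW: "\<And>r. r \<ge> t0 \<Longrightarrow> (W has_vector_derivative W' r) (at r within {t0..})"
      and JW: "\<And>r. r \<ge> t0 \<Longrightarrow> J *v W' r = E r *\<^sub>R \<psi> r - K *v W r"
      by (simp_all add: backstepping_error_dynamics_def)
    show "(norm (X t, E t, W t))\<^sup>2 \<le> M / m * (norm (X t0, E t0, W t0))\<^sup>2 * exp (- (q / M) * (t - t0))"
    proof (rule lyapunov_exponential_estimate[where N = "\<lambda>r. (norm (X r, E r, W r))\<^sup>2"])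
      show "((\<lambda>t. X t \<bullet> (P *v X t) + (E t)\<^sup>2 + W t \<bullet> (J *v W t)) has_real_derivative
              - (X r \<bullet> (Q *v X r)) - (1 / Rf) * (b \<bullet> (P *v X r))\<^sup>2
              - 2 * ks * (E r)\<^sup>2 - 2 * (W r \<bullet> (K *v W r))) (at r within {t0..})" if "r \<ge> t0" for r
        by (rule backstepping_lyapunov_derivative[OF P_sym J_sym ARE g dX dE dW JW]) (use that in auto)
      show "- (X r \<bullet> (Q *v X r)) - (1 / Rf) * (b \<bullet> (P *v X r))\<^sup>2 - 2 * ks * (E r)\<^sup>2
              - 2 * (W r \<bullet> (K *v W r)) \<le> - q * (norm (X r, E r, W r))\<^sup>2" for r
      proof -
        have "0 \<le> (1 / Rf) * (b \<bullet> (P *v X r))\<^sup>2"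
          using \<open>Rf > 0\<close> by simp
        then show ?thesis
          using dissipation[of "X r" "E r" "W r"] K_nonneg[of "W r"] by linarith
      qed
    qed (use V_lower V_upper \<open>0 < m\<close> \<open>m \<le> M\<close> \<open>0 < q\<close> \<open>t \<ge> t0\<close> in auto)
  qed
qed

lemma tendsto_exp_decay: "(c::real) > 0 \<Longrightarrow> ((\<lambda>t. exp (- c * (t - t0))) \<longlongrightarrow> 0) at_top"
  by (intro filterlim_compose[OF exp_at_bot] filterlim_tendsto_neg_mult_at_bot[OF tendsto_const]
      filterlim_tendsto_add_at_top[OF tendsto_const filterlim_ident, of "- t0", simplified]) auto

lemma exponential_estimate_imp_stable_attractive:
  fixes Z :: "'a \<Rightarrow> real \<Rightarrow> 'b::real_normed_vector"
  assumes "R \<ge> 1" "c > 0"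
    and estimate: "\<And>p t. T p \<Longrightarrow> t \<ge> t0 \<Longrightarrow>
                     (norm (Z p t))\<^sup>2 \<le> R * (norm (Z p t0))\<^sup>2 * exp (- c * (t - t0))"
  shows "(\<forall>\<epsilon>>0. \<exists>\<delta>>0. \<forall>p. T p \<and> norm (Z p t0) < \<delta> \<longrightarrow> (\<forall>t\<ge>t0. norm (Z p t) < \<epsilon>))
       \<and> (\<exists>r>0. \<forall>p. T p \<and> norm (Z p t0) < r \<longrightarrow> (Z p \<longlongrightarrow> 0) at_top)"
proof
  show "\<forall>\<epsilon>>0. \<exists>\<delta>>0. \<forall>p. T p \<and> norm (Z p t0) < \<delta> \<longrightarrow> (\<forall>t\<ge>t0. norm (Z p t) < \<epsilon>)"
  proof (intro allI impI)
    fix \<epsilon> :: real assume "\<epsilon> > 0"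
    show "\<exists>\<delta>>0. \<forall>p. T p \<and> norm (Z p t0) < \<delta> \<longrightarrow> (\<forall>t\<ge>t0. norm (Z p t) < \<epsilon>)"
    proof (intro exI[of _ "\<epsilon> / R"] conjI allI impI)
      show "\<epsilon> / R > 0" using \<open>\<epsilon> > 0\<close> \<open>R \<ge> 1\<close> by simp
      fix p t assume p: "T p \<and> norm (Z p t0) < \<epsilon> / R" and "t \<ge> t0"
      have "exp (- c * (t - t0)) \<le> 1"
        using \<open>c > 0\<close> \<open>t \<ge> t0\<close> by simp
      then have "R * (norm (Z p t0))\<^sup>2 * exp (- c * (t - t0)) \<le> R * (norm (Z p t0))\<^sup>2"
        using \<open>R \<ge> 1\<close> by (intro mult_left_le) auto
      with estimate[of p t] p \<open>t \<ge> t0\<close> have "(norm (Z p t))\<^sup>2 \<le> R * (norm (Z p t0))\<^sup>2"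
        by linarith
      also have "\<dots> < R * (\<epsilon> / R)\<^sup>2"
        using p \<open>R \<ge> 1\<close> by (intro mult_strict_left_mono power_strict_mono) auto
      also have "\<dots> = \<epsilon>\<^sup>2 / R"
        using \<open>R \<ge> 1\<close> by (simp add: power2_eq_square)
      also have "\<dots> \<le> \<epsilon>\<^sup>2"
        using \<open>R \<ge> 1\<close> by (simp add: divide_le_eq mult_le_cancel_left1)
      finally show "norm (Z p t) < \<epsilon>"
        using \<open>\<epsilon> > 0\<close> by (simp add: power2_less_imp_less)
    qed
  qed
next
  show "\<exists>r>0. \<forall>p. T p \<and> norm (Z p t0) < r \<longrightarrow> (Z p \<longlongrightarrow> 0) at_top"
  proof (intro exI[of _ 1] conjI allI impI)
    fix p assume "T p \<and> norm (Z p t0) < 1"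
    then have "\<forall>\<^sub>F t in at_top. norm (Z p t) \<le> sqrt (R * (norm (Z p t0))\<^sup>2 * exp (- c * (t - t0)))"
      using estimate unfolding eventually_at_top_linorder by (metis real_le_rsqrt)
    moreover have "((\<lambda>t. sqrt (R * (norm (Z p t0))\<^sup>2 * exp (- c * (t - t0)))) \<longlongrightarrow> 0) at_top"
      using tendsto_real_sqrt[OF tendsto_mult_right_zero[OF tendsto_exp_decay[OF \<open>c > 0\<close>]]] by simp
    ultimately show "(Z p \<longlongrightarrow> 0) at_top"
      by (rule Lim_null_comparison)
  qed simp
qed

theorem proposition1:
  fixes nu w beta wE inc Sl xd yd Rf ks th :: real
    and s :: "real^3" and J K :: "real^3^3"
    and Q P :: "real^4^4" and g :: "real^4"
    and xi xi' :: "real \<Rightarrow> real^3"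
  assumes "lam = lam_i nu w beta Sl wE inc"
    and "A = Amat nu w beta Sl wE inc"
    and "b = bvec w beta"
    and "er = yd * lam / (3 * nu^2)"
    and "dSbar = - 2 * lam * er / (beta * w^2)"
    and "xdv = (vector [xd, yd, 0, 0] :: real^4)"
    and "xss = (vector [er - xd, 0, 0, 0] :: real^4)"
    and "Ac = A - outer b g"
  assumes nu_pos: "nu > 0" and w_pos: "w > 0" and beta_pos: "beta > 0" and wE_pos: "wE > 0"
    and inc: "0 \<le> inc" "inc \<le> pi"
    and s_pos: "\<forall>k. s$k > 0"
    and J_pd: "sym_pd J"
    and Q_pd: "sym_pd Q" and Rf_pos: "Rf > 0"
    and P_pd: "sym_pd P"
    and ARE: "transpose A ** P + P ** A - (1 / Rf) *\<^sub>R (P ** outer b b ** P) + Q = 0"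
    and g_def: "g = (1 / Rf) *\<^sub>R (P *v b)"
    and ks_pos: "ks > 0"
    and K_pd: "sym_pd K"
    and th_nonneg: "th \<ge> 0"
    and xi_unit: "\<forall>t\<ge>th. norm (xi t) = 1"
    and xi_deriv: "\<forall>t\<ge>th. (xi has_vector_derivative xi' t) (at t within {th..})"
  assumes "eta = (\<lambda>(Rm :: real \<Rightarrow> real^3^3) t. Rm t *v xi t)"
    and "sm = (\<lambda>Rm. diagm s *v vsgn (eta Rm th))"
    and "dS = (\<lambda>Rm t. Sl - vsgn (eta Rm t) \<bullet> (diagm s *v eta Rm t))"
    and "psi = (\<lambda>Rm t. - (skew (eta Rm t) *v sm Rm))"
    and "phi = (\<lambda>Rm t. sm Rm \<bullet> (Rm t *v xi' t))"
    and "Xe = (\<lambda>(x :: real \<Rightarrow> real^4) t. x t - xdv - xss)"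
    and "dSe = (\<lambda>x Rm t. dS Rm t - (- (g \<bullet> Xe x t) + dSbar))"
    and "Lam = (\<lambda>x Rm t. - phi Rm t + (b \<bullet> (P *v Xe x t) + g \<bullet> (Ac *v Xe x t))
                          + (g \<bullet> b) * dSe x Rm t)"
    and "ome = (\<lambda>(om :: real \<Rightarrow> real^3) omd t. om t - omd t)"
    and "u = (\<lambda>x Rm om omd (omd' :: real \<Rightarrow> real^3) t.
               - (skew (J *v om t) *v om t) + J *v omd' t + dSe x Rm t *\<^sub>R psi Rm t
               - K *v ome om omd t)"
    and "Traj = (\<lambda>x Rm om om' omd omd'.
           (\<forall>t\<ge>th. Rm t \<in> SO3)
         \<and> (\<forall>t\<ge>th. vsgn (eta Rm t) = vsgn (eta Rm th))
         \<and> (\<forall>t\<ge>th. (Rm has_vector_derivative - (skew (om t) ** Rm t)) (at t within {th..}))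
         \<and> (\<forall>t\<ge>th. (Xe x has_vector_derivative
                      (A *v Xe x t + A *v (xdv + xss) + dS Rm t *\<^sub>R b)) (at t within {th..}))
         \<and> (\<forall>t\<ge>th. (om has_vector_derivative om' t) (at t within {th..})
                    \<and> J *v om' t = skew (J *v om t) *v om t + u x Rm om omd omd' t)
         \<and> (\<forall>t\<ge>th. (omd has_vector_derivative omd' t) (at t within {th..}))
         \<and> (\<forall>t\<ge>th. Lam x Rm t - psi Rm t \<bullet> omd t + ks * dSe x Rm t = 0))"
    and "Z = (\<lambda>x Rm om omd t. (Xe x t, dSe x Rm t, ome om omd t))"
  shows "(\<forall>\<epsilon>>0. \<exists>\<delta>>0. \<forall>x Rm om om' omd omd'.
            Traj x Rm om om' omd omd' \<and> norm (Z x Rm om omd th) < \<delta>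
            \<longrightarrow> (\<forall>t\<ge>th. norm (Z x Rm om omd t) < \<epsilon>))
       \<and> (\<exists>r>0. \<forall>x Rm om om' omd omd'.
            Traj x Rm om om' omd omd' \<and> norm (Z x Rm om omd th) < r
            \<longrightarrow> ((Z x Rm om omd) \<longlongrightarrow> 0) at_top)"
proof -
  obtain R c where "R \<ge> 1" "c > 0"
    and estimate: "\<And>X E W \<psi> W' t. backstepping_error_dynamics A b g P ks J K th X E W \<psi> W' \<Longrightarrow>
        t \<ge> th \<Longrightarrow> (norm (X t, E t, W t))\<^sup>2 \<le> R * (norm (X th, E th, W th))\<^sup>2 * exp (- c * (t - th))"
    using backstepping_exponential_estimate[OF P_pd Q_pd J_pd K_pd ks_pos Rf_pos ARE g_def] by blast
  have offset: "A *v (xdv + xss) = - dSbar *\<^sub>R b"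
  proof -
    have "xdv + xss = vector [er, yd, 0, 0]"
      by (simp add: assms(6,7) vec_eq_iff forall_4)
    then show ?thesis
      using Amat_mult_steady_state[OF nu_pos beta_pos w_pos assms(1,4,5)] by (simp add: assms(2,3))
  qed
  have error_dynamics: "backstepping_error_dynamics A b g P ks J K th
      (Xe x) (dSe x Rm) (ome om omd) (psi Rm) (\<lambda>r. om' r - omd' r)"
    if "Traj x Rm om om' omd omd'" for x Rm om om' omd omd'
    unfolding backstepping_error_dynamics_def
  proof (intro allI impI conjI)
    fix r assume "r \<ge> th"
    have sign: "\<forall>q\<ge>th. vsgn (eta Rm q) = vsgn (eta Rm th)"
      and dRm: "(Rm has_vector_derivative - (skew (om r) ** Rm r)) (at r within {th..})"
      and dXe: "(Xe x has_vector_derivative A *v Xe x r + A *v (xdv + xss) + dS Rm r *\<^sub>R b)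
                  (at r within {th..})"
      and dom: "(om has_vector_derivative om' r) (at r within {th..})"
      and J_om': "J *v om' r = skew (J *v om r) *v om r + u x Rm om omd omd' r"
      and domd: "(omd has_vector_derivative omd' r) (at r within {th..})"
      and constraint: "Lam x Rm r - psi Rm r \<bullet> omd r + ks * dSe x Rm r = 0"
      using that \<open>r \<ge> th\<close> unfolding assms(37) by blast+
    have "vsgn (Rm q *v xi q) = vsgn (Rm th *v xi th)" if "q \<ge> th" for q
      using sign that unfolding assms(27) by blast
    from effective_surface_has_derivative[OF this dRm xi_deriv[rule_format, OF \<open>r \<ge> th\<close>] \<open>r \<ge> th\<close>]
    have dS: "(dS Rm has_real_derivative - phi Rm r - psi Rm r \<bullet> om r) (at r within {th..})"
      by (simp add: assms(27-31))
    show dX: "(Xe x has_vector_derivative (A - outer b g) *v Xe x r + dSe x Rm r *\<^sub>R b)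
                (at r within {th..})"
      using lqr_closed_loop_has_vector_derivative[OF dXe offset] by (simp add: assms(33))
    show "(dSe x Rm has_real_derivative - (psi Rm r \<bullet> ome om omd r) - ks * dSe x Rm r - b \<bullet> (P *v Xe x r))
        (at r within {th..})"
      unfolding assms(35)
      by (rule surface_error_has_derivative[where E = "dSe x Rm" and X = "Xe x",
            OF dS dX[folded assms(8)] _ constraint[unfolded assms(34)]])
        (simp add: assms(33))
    show "(ome om omd has_vector_derivative om' r - omd' r) (at r within {th..})"
      unfolding assms(35) by (rule has_vector_derivative_diff[OF dom domd])
    show "J *v (om' r - omd' r) = dSe x Rm r *\<^sub>R psi Rm r - K *v ome om omd r"
      using J_om' by (simp add: assms(36) matrix_vector_mult_diff_distrib)
  qed
  have error_estimate: "(norm (Z x Rm om omd t))\<^sup>2 \<le> R * (norm (Z x Rm om omd th))\<^sup>2 * exp (- c * (t - th))"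
    if "Traj x Rm om om' omd omd'" "t \<ge> th" for x Rm om om' omd omd' t
    using estimate[OF error_dynamics[OF that(1)] that(2)] by (simp add: assms(38))
  let ?T = "\<lambda>(x, Rm, om, om', omd, omd'). Traj x Rm om om' omd omd'"
  let ?Z = "\<lambda>(x, Rm, om, om', omd, omd'). Z x Rm om omd"
  have "(\<forall>\<epsilon>>0. \<exists>\<delta>>0. \<forall>p. ?T p \<and> norm (?Z p th) < \<delta> \<longrightarrow> (\<forall>t\<ge>th. norm (?Z p t) < \<epsilon>))
      \<and> (\<exists>r>0. \<forall>p. ?T p \<and> norm (?Z p th) < r \<longrightarrow> (?Z p \<longlongrightarrow> 0) at_top)"
  proof (rule exponential_estimate_imp_stable_attractive[OF \<open>R \<ge> 1\<close> \<open>c > 0\<close>])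
    fix p t assume "?T p" "t \<ge> th"
    then show "(norm (?Z p t))\<^sup>2 \<le> R * (norm (?Z p th))\<^sup>2 * exp (- c * (t - th))"
      using error_estimate by (cases p rule: prod_cases6) simp
  qed
  then show ?thesis by (simp add: split_paired_All)
qed

end
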